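(* Fix integers $m\ge d\ge1$, $\lambda=d/m$, and $\sigma^2,\tau^2>0$. Then $L_d^{(m-d)}\big(\frac{x}{\sigma^2+\tau^2}\big)$ and $L_d^{(m-d)}\big(\frac{x}{\sigma^2}\big)\boxplus_{d,\lambda}L_d^{(m-d)}\big(\frac{x}{\tau^2}\big)$ have the same roots (they differ only by a nonzero constant factor).
   Context: $L_d^{(\alpha)}(x)=\sum_{i=0}^d\binom{d+\alpha}{d-i}\frac{(-x)^i}{i!}$. For $p=\sum_{i=0}^d(-1)^ia_ix^{d-i}$, $q=\sum_{i=0}^d(-1)^ib_ix^{d-i}$: $(p\boxplus_{d,\lambda}q)(x)=\sum_{k=0}^dx^{d-k}(-1)^k\sum_{i+j=k}\frac{(d-i)!(d-j)!}{d!(d-k)!}\frac{(m-i)!(m-j)!}{m!(m-k)!}a_ib_j$. *)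

theory Defs
  imports "HOL-Computational_Algebra.Polynomial"
begin

definition laguerre :: "nat \<Rightarrow> real \<Rightarrow> real poly" where
  "laguerre d \<alpha> = (\<Sum>i=0..d. monom (((real d + \<alpha>) gchoose (d - i)) * (-1) ^ i / fact i) i)"

text \<open>Coefficient a_i of p written as p = sum_i (-1)^i a_i x^(d-i).\<close>
definition ffc_coeff :: "nat \<Rightarrow> real poly \<Rightarrow> nat \<Rightarrow> real" where
  "ffc_coeff d p i = (-1) ^ i * coeff p (d - i)"

text \<open>Rectangular finite free additive convolution with parameter lambda = d/m
  (encoded by the pair d, m).\<close>
definition rect_conv :: "nat \<Rightarrow> nat \<Rightarrow> real poly \<Rightarrow> real poly \<Rightarrow> real poly" where
  "rect_conv d m p q =
     (\<Sum>k=0..d. monom ((-1) ^ k *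
        (\<Sum>i=0..k. (fact (d - i) * fact (d - (k - i)) / (fact d * fact (d - k))) *
                   (fact (m - i) * fact (m - (k - i)) / (fact m * fact (m - k))) *
                   ffc_coeff d p i * ffc_coeff d q (k - i))) (d - k))"

end

theory Submission
  imports Defs
begin

text \<open>Written as p = sum_i (-1)^i a_i x^(d-i), the polynomial L_d^(m-d)(x/s) has
  a_i = (-1)^d binom(m,i) s^(i-d) / (d-i)!. The weights of the rectangular convolution cancel
  the factorials (d-i)! (d-j)! and turn binom(m,i) (m-i)! into m!/i!, so in the same convention
  the k-th coefficient of the convolution is m!/(d! k! (m-k)! (d-k)! (st)^d) times
  sum_i binom(k,i) s^i t^(k-i) = (s+t)^k. Up to a factor independent of k this is the k-th
  coefficient of L_d^(m-d)(x/(s+t)).\<close>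

abbreviation scaled_laguerre :: "nat \<Rightarrow> nat \<Rightarrow> real \<Rightarrow> real poly" where
  "scaled_laguerre d m s \<equiv> pcompose (laguerre d (real m - real d)) [:0, 1 / s:]"

lemma coeff_laguerre:
  "coeff (laguerre d \<alpha>) n =
     (if n \<le> d then ((real d + \<alpha>) gchoose (d - n)) * (-1) ^ n / fact n else 0)"
  unfolding laguerre_def by (simp add: coeff_sum coeff_monom sum.delta')

lemma coeff_scaled_laguerre:
  assumes "d \<le> m"
  shows "coeff (scaled_laguerre d m s) n =
    (if n \<le> d then real (m choose (d - n)) * (-1) ^ n / (fact n * s ^ n) else 0)"
  using assms by (simp add: coeff_pcompose_linear coeff_laguerre power_one_over flip: binomial_gbinomial)

lemma ffc_coeff_scaled_laguerre:
  assumes "i \<le> d" "d \<le> m"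
  shows "ffc_coeff d (scaled_laguerre d m s) i = (-1) ^ d * real (m choose i) / (fact (d - i) * s ^ (d - i))"
proof -
  have "(-1::real) ^ i * (-1) ^ (d - i) = (-1) ^ d"
    using assms(1) by (simp flip: power_add)
  with assms show ?thesis
    by (simp add: ffc_coeff_def coeff_scaled_laguerre)
qed

lemma coeff_sum_monom_reversed:
  "coeff (\<Sum>k=0..d. monom (f k) (d - k)) n = (if n \<le> d then f (d - n) else 0)"
proof -
  have "coeff (\<Sum>k=0..d. monom (f k) (d - k)) n = (\<Sum>k=0..d. if k = d - n \<and> n \<le> d then f k else 0)"
    by (simp add: coeff_sum coeff_monom) (rule sum.cong, auto)
  then show ?thesis
    by simp
qed

lemma rect_conv_summand_scaled_laguerre:
  fixes s t :: real
  assumes "s \<noteq> 0" "t \<noteq> 0" "i + j \<le> d" "d \<le> m"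
  shows "(fact (d - i) * fact (d - j) / (fact d * fact (d - (i + j)))) *
         (fact (m - i) * fact (m - j) / (fact m * fact (m - (i + j)))) *
         ffc_coeff d (scaled_laguerre d m s) i * ffc_coeff d (scaled_laguerre d m t) j
       = fact m / (fact d * fact (d - (i + j)) * fact (m - (i + j)) * fact (i + j) * (s * t) ^ d) *
         (real ((i + j) choose i) * s ^ i * t ^ j)" (is "?lhs = ?rhs")
proof -
  have fact_choose: "real (m choose l) * fact (m - l) = fact m / fact l" if "l \<le> m" for l
    using that by (simp add: binomial_fact)
  have "?lhs = ((-1) ^ d * (-1) ^ d) * (real (m choose i) * fact (m - i)) * (real (m choose j) * fact (m - j)) /
        (fact d * fact (d - (i + j)) * fact m * fact (m - (i + j)) * s ^ (d - i) * t ^ (d - j))"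
    using assms by (simp add: ffc_coeff_scaled_laguerre field_simps)
  also have "\<dots> = fact m / (fact d * fact (d - (i + j)) * fact (m - (i + j)) * fact i * fact j *
        s ^ (d - i) * t ^ (d - j))"
    using assms by (simp add: fact_choose flip: power_add)
  also have "\<dots> = ?rhs"
    using assms by (simp add: binomial_fact power_diff power_mult_distrib)
  finally show ?thesis .
qed

lemma rect_conv_inner_sum_scaled_laguerre:
  fixes s t :: real
  assumes "s \<noteq> 0" "t \<noteq> 0" "k \<le> d" "d \<le> m"
  shows "(\<Sum>i=0..k. (fact (d - i) * fact (d - (k - i)) / (fact d * fact (d - k))) *
           (fact (m - i) * fact (m - (k - i)) / (fact m * fact (m - k))) *
           ffc_coeff d (scaled_laguerre d m s) i * ffc_coeff d (scaled_laguerre d m t) (k - i))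
       = fact m / (fact d * fact (d - k) * fact (m - k) * fact k * (s * t) ^ d) * (s + t) ^ k"
    (is "sum ?summand {0..k} = ?C * _")
proof -
  have "sum ?summand {0..k} = (\<Sum>i=0..k. ?C * (real (k choose i) * s ^ i * t ^ (k - i)))"
  proof (rule sum.cong)
    fix i assume "i \<in> {0..k}"
    then have "i + (k - i) = k" by simp
    with assms show "?summand i = ?C * (real (k choose i) * s ^ i * t ^ (k - i))"
      using rect_conv_summand_scaled_laguerre[of s t i "k - i" d m] by simp
  qed simp
  also have "\<dots> = ?C * (s + t) ^ k"
    by (simp add: binomial_ring sum_distrib_left atLeast0AtMost)
  finally show ?thesis .
qed

lemma rect_conv_scaled_laguerre:
  fixes s t :: real
  assumes "s \<noteq> 0" "t \<noteq> 0" "s + t \<noteq> 0" "d \<le> m"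
  shows "rect_conv d m (scaled_laguerre d m s) (scaled_laguerre d m t) =
    smult ((-1) ^ d * (s + t) ^ d / ((s * t) ^ d * fact d)) (scaled_laguerre d m (s + t))"
  (is "?conv = smult ?c ?target")
proof (rule poly_eqI)
  fix n
  show "coeff ?conv n = coeff (smult ?c ?target) n"
  proof (cases "n \<le> d")
    case True
    then obtain k where d: "d = n + k" using le_Suc_ex by blast
    then have "d - n = k" "k \<le> d" by simp_all
    have "coeff ?conv n =
        (-1) ^ k * (fact m / (fact d * fact (d - k) * fact (m - k) * fact k * (s * t) ^ d) * (s + t) ^ k)"
      unfolding rect_conv_def coeff_sum_monom_reversed if_P[OF True] \<open>d - n = k\<close>
        rect_conv_inner_sum_scaled_laguerre[OF assms(1,2) \<open>k \<le> d\<close> assms(4)] ..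
    also have "\<dots> = ?c * (real (m choose k) * (-1) ^ n / (fact n * (s + t) ^ n))"
    proof -
      have "(-1::real) ^ d * (-1) ^ n = (-1) ^ k"
        unfolding d by (simp add: power_add flip: power_mult_distrib mult.assoc)
      moreover have "real (m choose k) = fact m / (fact k * fact (m - k))"
        using assms(4) d by (simp add: binomial_fact)
      ultimately show ?thesis
        using assms unfolding d by (simp add: field_simps power_add)
    qed
    also have "\<dots> = coeff (smult ?c ?target) n"
      using assms True \<open>d - n = k\<close> by (simp add: coeff_scaled_laguerre)
    finally show ?thesis .
  qed (simp add: rect_conv_def coeff_sum_monom_reversed coeff_scaled_laguerre assms(4))
qed

theorem mainTheorem10:
  fixes d m :: nat and s t :: real
  assumes "1 \<le> d" and "d \<le> m" and "0 < s" and "0 < t"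
  shows "\<exists>c::real. c \<noteq> 0 \<and>
    rect_conv d m (pcompose (laguerre d (real m - real d)) [:0, 1 / s:])
                  (pcompose (laguerre d (real m - real d)) [:0, 1 / t:])
    = smult c (pcompose (laguerre d (real m - real d)) [:0, 1 / (s + t):])"
proof -
  let ?c = "(-1) ^ d * (s + t) ^ d / ((s * t) ^ d * fact d) :: real"
  have "?c \<noteq> 0"
    using assms by simp
  moreover have "rect_conv d m (scaled_laguerre d m s) (scaled_laguerre d m t) =
      smult ?c (scaled_laguerre d m (s + t))"
    using assms by (intro rect_conv_scaled_laguerre) auto
  ultimately show ?thesis
    by blast
qed

end
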